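(* Let $\{\gamma_\Lambda\}_{\Lambda\in\mathcal{S}}$ be a specification on $(\Omega,\mathcal{F})$. Then for each $\Lambda\in\mathcal{S}$, $\Gamma\in\mathcal{S}(\Lambda^c)$ and bounded measurable functions $f,g$ on $\Omega$, $$\gamma_{\Lambda\cup\Gamma}\bigl[f\,\gamma_\Lambda(\gamma_\Gamma(g))\bigr]=\gamma_{\Lambda\cup\Gamma}\bigl[g\,\gamma_\Gamma(\gamma_\Lambda(f))\bigr].$$
   Context: $(E,\mathcal{E})$ is a measurable space, $\Omega=E^{\mathbb{Z}^d}$ with product $\sigma$-algebra $\mathcal{F}$; for $U\subset\mathbb{Z}^d$, $\mathcal{F}_U$ is the $\sigma$-algebra generated by the coordinates in $U$, $U^c$ the complement, $\mathcal{S}(U)$ the finite subsets of $U$, $\mathcal{S}=\mathcal{S}(\mathbb{Z}^d)$. For a kernel $\gamma$ and bounded measurable $f$, $\gamma(f)(\omega)=\int f(\eta)\gamma(d\eta\mid\omega)$; $(\gamma\tilde\gamma)(f)=\gamma(\tilde\gamma(f))$. A specification is a family of probability kernels $\{\gamma_\Lambda\}_{\Lambda\in\mathcal{S}}$ such that for all $\Lambda\in\mathcal{S}$: $\gamma_\Lambda(A\mid\cdot)$ is $\mathcal{F}_{\Lambda^c}$-measurable for $A\in\mathcal{F}$; $\gamma_\Lambda(B\mid\omega)=\mathbf 1_B(\omega)$ for $B\in\mathcal{F}_{\Lambda^c}$; $\gamma_\Delta\gamma_\Lambda=\gamma_\Delta$ for all $\Delta\in\mathcal{S}$ with $\Delta\supset\Lambda$.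 *)

theory Defs
  imports "HOL-Probability.Probability"
begin

text \<open>Configuration space \<Omega> = E^(Z^d) with the product sigma-algebra.
  Sites of Z^d are vectors int^'d, 'd a finite type with CARD('d) = d.\<close>

type_synonym ('e, 'd) config = "(int ^ 'd) \<Rightarrow> 'e"

definition Omega :: "'e measure \<Rightarrow> ('e, 'd::finite) config measure" where
  "Omega E = PiM UNIV (\<lambda>_. E)"

definition F_sub :: "'e measure \<Rightarrow> (int ^ 'd::finite) set \<Rightarrow> ('e, 'd) config measure" where
  "F_sub E U = sigma (space (Omega E))
     {(\<lambda>\<omega>. \<omega> i) -` B \<inter> space (Omega E) | i B. i \<in> U \<and> B \<in> sets E}"

definition prob_kernel :: "'e measure \<Rightarrow> (('e, 'd::finite) config \<Rightarrow> ('e, 'd) config measure) \<Rightarrow> bool" where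
  "prob_kernel E k \<longleftrightarrow>
     (\<forall>\<omega>\<in>space (Omega E). prob_space (k \<omega>) \<and> sets (k \<omega>) = sets (Omega E)) \<and>
     (\<forall>A\<in>sets (Omega E). (\<lambda>\<omega>. measure (k \<omega>) A) \<in> borel_measurable (Omega E))"

definition kapply :: "(('e, 'd::finite) config \<Rightarrow> ('e, 'd) config measure) \<Rightarrow>
     (('e, 'd) config \<Rightarrow> real) \<Rightarrow> ('e, 'd) config \<Rightarrow> real" where
  "kapply k f \<omega> = (\<integral>\<eta>. f \<eta> \<partial>(k \<omega>))"

definition is_specification :: "'e measure \<Rightarrow>
     ((int ^ 'd::finite) set \<Rightarrow> ('e, 'd) config \<Rightarrow> ('e, 'd) config measure) \<Rightarrow> bool" where
  "is_specification E \<gamma> \<longleftrightarrow>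
    (\<forall>\<Lambda>. finite \<Lambda> \<longrightarrow>
       prob_kernel E (\<gamma> \<Lambda>) \<and>
       (\<forall>A\<in>sets (Omega E). (\<lambda>\<omega>. measure (\<gamma> \<Lambda> \<omega>) A) \<in> borel_measurable (F_sub E (- \<Lambda>))) \<and>
       (\<forall>B\<in>sets (F_sub E (- \<Lambda>)). \<forall>\<omega>\<in>space (Omega E). measure (\<gamma> \<Lambda> \<omega>) B = indicator B \<omega>) \<and>
       (\<forall>\<Delta>. finite \<Delta> \<and> \<Lambda> \<subseteq> \<Delta> \<longrightarrow>
          (\<forall>A\<in>sets (Omega E). \<forall>\<omega>\<in>space (Omega E).
             kapply (\<gamma> \<Delta>) (kapply (\<gamma> \<Lambda>) (indicator A)) \<omega> = measure (\<gamma> \<Delta> \<omega>) A)))"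

end

theory Submission
  imports Defs
begin

text \<open>Write \<open>\<Delta> = \<Lambda> \<union> \<Gamma>\<close>. By consistency \<open>\<gamma>\<^sub>\<Delta> = \<gamma>\<^sub>\<Delta> \<gamma>\<^sub>\<Lambda>\<close>, and since \<open>\<gamma>\<^sub>\<Lambda> h\<close> is
  measurable with respect to the coordinates outside \<open>\<Lambda>\<close>, properness lets \<open>\<gamma>\<^sub>\<Lambda>\<close> pull it out of an integral:
  \<open>\<gamma>\<^sub>\<Delta>(f \<gamma>\<^sub>\<Lambda> h) = \<gamma>\<^sub>\<Delta>(\<gamma>\<^sub>\<Lambda> f \<cdot> \<gamma>\<^sub>\<Lambda> h)\<close>. The right-hand side is symmetric, so
  \<open>\<gamma>\<^sub>\<Delta>(f \<gamma>\<^sub>\<Lambda> h) = \<gamma>\<^sub>\<Delta>(h \<gamma>\<^sub>\<Lambda> f)\<close>. Taking \<open>h = \<gamma>\<^sub>\<Gamma> g\<close>, and on the other side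
  exchanging the roles of \<open>\<Lambda>\<close> and \<open>\<Gamma>\<close>, both sides of the claim become
  \<open>\<gamma>\<^sub>\<Delta>(\<gamma>\<^sub>\<Lambda> f \<cdot> \<gamma>\<^sub>\<Gamma> g)\<close>.\<close>

lemma subalgebra_F_sub: "subalgebra (Omega E) (F_sub E U)"
proof -
  have "(\<lambda>\<omega>. \<omega> i) -` B \<inter> space (Omega E) \<in> sets (Omega E)" if "B \<in> sets E" for i B
  proof (rule measurable_sets[OF _ that])
    show "(\<lambda>\<omega>. \<omega> i) \<in> Omega E \<rightarrow>\<^sub>M E"
      unfolding Omega_def by (rule measurable_component_singleton) simp
  qed
  then have "{(\<lambda>\<omega>. \<omega> i) -` B \<inter> space (Omega E) | i B. i \<in> U \<and> B \<in> sets E} \<subseteq> sets (Omega E)"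
    by blast
  then show ?thesis
    unfolding subalgebra_def F_sub_def
    by (simp add: space_measure_of_conv sets_measure_of_conv sets.sigma_sets_subset
        subset_trans[OF _ sets.sets_into_space])
qed

lemma
  assumes "prob_kernel E k" and "\<omega> \<in> space (Omega E)"
  shows prob_kernel_prob_space: "prob_space (k \<omega>)"
    and sets_prob_kernel: "sets (k \<omega>) = sets (Omega E)"
    and space_prob_kernel: "space (k \<omega>) = space (Omega E)"
proof -
  show "prob_space (k \<omega>)" and sets: "sets (k \<omega>) = sets (Omega E)"
    using assms unfolding prob_kernel_def by blast+
  from sets show "space (k \<omega>) = space (Omega E)"
    by (rule sets_eq_imp_space_eq)
qed

lemma emeasure_prob_kernel:
  assumes "prob_kernel E k" and "\<omega> \<in> space (Omega E)"
  shows "emeasure (k \<omega>) A = ennreal (measure (k \<omega>) A)"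
  using prob_kernel_prob_space[OF assms] by (simp add: prob_space.finite_measure finite_measure.emeasure_eq_measure)

lemma prob_kernel_measurable_subalgebra:
  fixes k :: "('e, 'd::finite) config \<Rightarrow> ('e, 'd) config measure"
  assumes k: "prob_kernel E k" and F: "subalgebra (Omega E) F"
    and meas: "\<And>A. A \<in> sets (Omega E) \<Longrightarrow> (\<lambda>\<omega>. measure (k \<omega>) A) \<in> borel_measurable F"
  shows "k \<in> F \<rightarrow>\<^sub>M subprob_algebra (Omega E)"
proof (rule measurable_subprob_algebra)
  fix \<omega> assume "\<omega> \<in> space F"
  then have \<omega>: "\<omega> \<in> space (Omega E)"
    using F by (simp add: subalgebra_def)
  show "subprob_space (k \<omega>)"
    using prob_kernel_prob_space[OF k \<omega>] by (rule prob_space_imp_subprob_space)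
  show "sets (k \<omega>) = sets (Omega E)"
    using sets_prob_kernel[OF k \<omega>] .
next
  fix A :: "('e, 'd) config set" assume A: "A \<in> sets (Omega E)"
  have "emeasure (k \<omega>) A = ennreal (measure (k \<omega>) A)" if "\<omega> \<in> space F" for \<omega>
    using that F by (simp add: subalgebra_def emeasure_prob_kernel[OF k])
  moreover have "(\<lambda>\<omega>. ennreal (measure (k \<omega>) A)) \<in> borel_measurable F"
    using meas[OF A] by (rule measurable_compose) simp
  ultimately show "(\<lambda>\<omega>. emeasure (k \<omega>) A) \<in> borel_measurable F"
    by (rule measurable_cong[THEN iffD2])
qed

lemma prob_kernel_measurable:
  assumes "prob_kernel E k"
  shows "k \<in> Omega E \<rightarrow>\<^sub>M subprob_algebra (Omega E)"
  using assms by (intro prob_kernel_measurable_subalgebra) (simp_all add: subalgebra_def prob_kernel_def)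

lemma measurable_kapply_subalgebra:
  assumes "prob_kernel E k" and "subalgebra (Omega E) F"
    and "\<And>A. A \<in> sets (Omega E) \<Longrightarrow> (\<lambda>\<omega>. measure (k \<omega>) A) \<in> borel_measurable F"
    and h: "h \<in> borel_measurable (Omega E)"
  shows "kapply k h \<in> borel_measurable F"
proof -
  have "kapply k h = (\<lambda>M. integral\<^sup>L M h) \<circ> k"
    by (simp add: kapply_def fun_eq_iff)
  then show ?thesis
    using measurable_comp[OF prob_kernel_measurable_subalgebra[OF assms(1-3)]
        integral_measurable_subprob_algebra[OF h]]
    by simp
qed

lemma measurable_kapply:
  assumes "prob_kernel E k" and "h \<in> borel_measurable (Omega E)"
  shows "kapply k h \<in> borel_measurable (Omega E)"
  using assms by (intro measurable_kapply_subalgebra) (simp_all add: subalgebra_def prob_kernel_def)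

lemma
  assumes k: "prob_kernel E k" and \<omega>: "\<omega> \<in> space (Omega E)"
    and h: "h \<in> borel_measurable (Omega E)" and C: "\<forall>x\<in>space (Omega E). \<bar>h x\<bar> \<le> C"
  shows integrable_prob_kernel: "integrable (k \<omega>) h"
    and abs_kapply_le: "\<bar>kapply k h \<omega>\<bar> \<le> C"
proof -
  interpret prob_space "k \<omega>"
    by (rule prob_kernel_prob_space[OF k \<omega>])
  have C': "AE x in k \<omega>. \<bar>h x\<bar> \<le> C"
    using C by (intro AE_I2) (simp add: space_prob_kernel[OF k \<omega>])
  have h': "h \<in> borel_measurable (k \<omega>)"
    using h by (simp add: sets_prob_kernel[OF k \<omega>] cong: measurable_cong_sets)
  show int: "integrable (k \<omega>) h"
    using C' h' by (intro integrable_const_bound[where B=C]) simp_all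
  have "integral\<^sup>L (k \<omega>) h \<le> C" and "- C \<le> integral\<^sup>L (k \<omega>) h"
    using C' by (auto intro!: integral_le_const integral_ge_const int elim: eventually_mono)
  then show "\<bar>kapply k h \<omega>\<bar> \<le> C"
    by (simp add: kapply_def)
qed

lemma kapply_indicator:
  assumes "prob_kernel E k" and "\<omega> \<in> space (Omega E)" and "A \<in> sets (Omega E)"
  shows "kapply k (indicator A) \<omega> = measure (k \<omega>) A"
  using assms sets.sets_into_space[of A "Omega E"]
  by (simp add: kapply_def space_prob_kernel Int_absorb2)

lemma bind_prob_kernel_eq:
  assumes k: "prob_kernel E k" and l: "prob_kernel E l" and \<omega>: "\<omega> \<in> space (Omega E)"
    and comp: "\<And>A. A \<in> sets (Omega E) \<Longrightarrow> kapply k (kapply l (indicator A)) \<omega> = measure (k \<omega>) A"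
  shows "k \<omega> \<bind> l = k \<omega>"
proof (rule measure_eqI)
  have ne: "space (k \<omega>) \<noteq> {}"
    using \<omega> by (auto simp: space_prob_kernel[OF k \<omega>])
  have l': "l \<in> k \<omega> \<rightarrow>\<^sub>M subprob_algebra (Omega E)"
    using prob_kernel_measurable[OF l] by (simp add: sets_prob_kernel[OF k \<omega>] cong: measurable_cong_sets)
  have "sets (k \<omega> \<bind> l) = sets (Omega E)"
    using ne by (intro sets_bind) (simp_all add: space_prob_kernel[OF k \<omega>] sets_prob_kernel[OF l])
  then show sets: "sets (k \<omega> \<bind> l) = sets (k \<omega>)"
    by (simp add: sets_prob_kernel[OF k \<omega>])
  fix A assume "A \<in> sets (k \<omega> \<bind> l)"
  then have A: "A \<in> sets (Omega E)"
    using sets by (simp add: sets_prob_kernel[OF k \<omega>])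
  have ind: "indicator A \<in> borel_measurable (Omega E)" "\<forall>x\<in>space (Omega E). \<bar>indicator A x :: real\<bar> \<le> 1"
    using A by (simp_all add: indicator_def)
  have "emeasure (k \<omega> \<bind> l) A = (\<integral>\<^sup>+x. emeasure (l x) A \<partial>k \<omega>)"
    by (rule emeasure_bind[OF ne l' A])
  also have "\<dots> = (\<integral>\<^sup>+x. ennreal (kapply l (indicator A) x) \<partial>k \<omega>)"
    by (intro nn_integral_cong)
      (simp add: space_prob_kernel[OF k \<omega>] kapply_indicator[OF l _ A] emeasure_prob_kernel[OF l])
  also have "\<dots> = ennreal (kapply k (kapply l (indicator A)) \<omega>)"
    unfolding kapply_def[of k]
  proof (rule nn_integral_eq_integral)
    show "integrable (k \<omega>) (kapply l (indicator A))"
      using abs_kapply_le[OF l _ ind]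
      by (intro integrable_prob_kernel[OF k \<omega> measurable_kapply[OF l ind(1)], of 1]) blast
    show "AE x in k \<omega>. 0 \<le> kapply l (indicator A) x"
      by (simp add: kapply_def)
  qed
  also have "\<dots> = emeasure (k \<omega>) A"
    by (simp add: comp[OF A] emeasure_prob_kernel[OF k \<omega>])
  finally show "emeasure (k \<omega> \<bind> l) A = emeasure (k \<omega>) A" .
qed

lemma kapply_kapply_eq:
  assumes k: "prob_kernel E k" and l: "prob_kernel E l" and \<omega>: "\<omega> \<in> space (Omega E)"
    and comp: "\<And>A. A \<in> sets (Omega E) \<Longrightarrow> kapply k (kapply l (indicator A)) \<omega> = measure (k \<omega>) A"
    and h: "h \<in> borel_measurable (Omega E)" and C: "\<forall>x\<in>space (Omega E). \<bar>h x\<bar> \<le> C"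
  shows "kapply k (kapply l h) \<omega> = kapply k h \<omega>"
proof -
  have l': "l \<in> k \<omega> \<rightarrow>\<^sub>M subprob_algebra (Omega E)"
    using prob_kernel_measurable[OF l] by (simp add: sets_prob_kernel[OF k \<omega>] cong: measurable_cong_sets)
  have "kapply k h \<omega> = integral\<^sup>L (k \<omega> \<bind> l) h"
    by (simp add: kapply_def bind_prob_kernel_eq[OF k l \<omega> comp])
  also have "\<dots> = (\<integral>x. integral\<^sup>L (l x) h \<partial>k \<omega>)"
  proof (rule integral_bind[OF h _ l', where B=C and B'=1])
    show "finite_measure (k \<omega>)"
      using prob_kernel_prob_space[OF k \<omega>] by (rule prob_space.finite_measure)
    show "AE x in k \<omega>. emeasure (l x) (space (l x)) \<le> ennreal 1"
      using prob_kernel_prob_space[OF l]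
      by (intro AE_I2) (simp add: space_prob_kernel[OF k \<omega>] prob_space.emeasure_space_1)
  qed (use C in simp)
  finally show ?thesis
    by (simp add: kapply_def)
qed

lemma kapply_mult_proper:
  assumes k: "prob_kernel E k" and \<omega>: "\<omega> \<in> space (Omega E)" and F: "subalgebra (Omega E) F"
    and proper: "\<And>B. B \<in> sets F \<Longrightarrow> measure (k \<omega>) B = indicator B \<omega>"
    and f: "f \<in> borel_measurable (Omega E)" and h: "h \<in> borel_measurable F"
  shows "kapply k (\<lambda>\<eta>. f \<eta> * h \<eta>) \<omega> = kapply k f \<omega> * h \<omega>"
proof -
  interpret prob_space "k \<omega>"
    by (rule prob_kernel_prob_space[OF k \<omega>])
  let ?S = "{\<eta> \<in> space F. h \<eta> \<noteq> h \<omega>}"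
  have S: "?S \<in> sets F"
    using h by measurable
  then have "measure (k \<omega>) ?S = 0" and "?S \<in> sets (k \<omega>)"
    using proper[OF S] F by (auto simp: subalgebra_def sets_prob_kernel[OF k \<omega>])
  then have "AE \<eta> in k \<omega>. h \<eta> = h \<omega>"
    using F by (intro AE_I'[of ?S]) (auto simp: emeasure_eq_measure subalgebra_def space_prob_kernel[OF k \<omega>])
  moreover have "f \<in> borel_measurable (k \<omega>)" and "h \<in> borel_measurable (k \<omega>)"
    using f measurable_from_subalg[OF F h]
    by (simp_all add: sets_prob_kernel[OF k \<omega>] cong: measurable_cong_sets)
  ultimately have "integral\<^sup>L (k \<omega>) (\<lambda>\<eta>. f \<eta> * h \<eta>) = integral\<^sup>L (k \<omega>) (\<lambda>\<eta>. f \<eta> * h \<omega>)"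
    by (intro integral_cong_AE) (auto elim: eventually_mono)
  then show ?thesis
    by (simp add: kapply_def)
qed

context
  fixes E :: "'e measure"
    and \<gamma> :: "(int ^ 'd::finite) set \<Rightarrow> ('e, 'd) config \<Rightarrow> ('e, 'd) config measure"
  assumes spec: "is_specification E \<gamma>"
begin

lemma
  assumes "finite \<Lambda>"
  shows specification_prob_kernel: "prob_kernel E (\<gamma> \<Lambda>)"
    and specification_measurable:
      "A \<in> sets (Omega E) \<Longrightarrow> (\<lambda>\<omega>. measure (\<gamma> \<Lambda> \<omega>) A) \<in> borel_measurable (F_sub E (- \<Lambda>))"
    and specification_proper:
      "B \<in> sets (F_sub E (- \<Lambda>)) \<Longrightarrow> \<omega> \<in> space (Omega E) \<Longrightarrow> measure (\<gamma> \<Lambda> \<omega>) B = indicator B \<omega>"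
    and specification_consistent:
      "finite \<Delta> \<Longrightarrow> \<Lambda> \<subseteq> \<Delta> \<Longrightarrow> A \<in> sets (Omega E) \<Longrightarrow> \<omega> \<in> space (Omega E) \<Longrightarrow>
        kapply (\<gamma> \<Delta>) (kapply (\<gamma> \<Lambda>) (indicator A)) \<omega> = measure (\<gamma> \<Delta> \<omega>) A"
  using spec assms unfolding is_specification_def by blast+

lemma specification_kapply_kapply:
  assumes \<Lambda>: "finite \<Lambda>" and \<Delta>: "finite \<Delta>" and "\<Lambda> \<subseteq> \<Delta>" and \<omega>: "\<omega> \<in> space (Omega E)"
    and h: "h \<in> borel_measurable (Omega E)" and C: "\<forall>x\<in>space (Omega E). \<bar>h x\<bar> \<le> C"
  shows "kapply (\<gamma> \<Delta>) (kapply (\<gamma> \<Lambda>) h) \<omega> = kapply (\<gamma> \<Delta>) h \<omega>"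
  using specification_consistent[OF \<Lambda> \<Delta> \<open>\<Lambda> \<subseteq> \<Delta>\<close> _ \<omega>]
  by (rule kapply_kapply_eq[OF specification_prob_kernel[OF \<Delta>] specification_prob_kernel[OF \<Lambda>] \<omega> _ h C])

lemma specification_kapply_mult_kapply:
  assumes \<Lambda>: "finite \<Lambda>" and \<omega>: "\<omega> \<in> space (Omega E)"
    and f: "f \<in> borel_measurable (Omega E)" and g: "g \<in> borel_measurable (Omega E)"
  shows "kapply (\<gamma> \<Lambda>) (\<lambda>\<eta>. f \<eta> * kapply (\<gamma> \<Lambda>) g \<eta>) \<omega> = kapply (\<gamma> \<Lambda>) f \<omega> * kapply (\<gamma> \<Lambda>) g \<omega>"
proof (rule kapply_mult_proper[OF _ \<omega> subalgebra_F_sub _ f])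
  show k: "prob_kernel E (\<gamma> \<Lambda>)"
    by (rule specification_prob_kernel[OF \<Lambda>])
  show "measure (\<gamma> \<Lambda> \<omega>) B = indicator B \<omega>" if "B \<in> sets (F_sub E (- \<Lambda>))" for B
    by (rule specification_proper[OF \<Lambda> that \<omega>])
  show "kapply (\<gamma> \<Lambda>) g \<in> borel_measurable (F_sub E (- \<Lambda>))"
    by (rule measurable_kapply_subalgebra[OF k subalgebra_F_sub specification_measurable[OF \<Lambda>] g])
qed

lemma specification_kapply_mult_kapply_outer:
  assumes \<Lambda>: "finite \<Lambda>" and \<Delta>: "finite \<Delta>" and "\<Lambda> \<subseteq> \<Delta>" and \<omega>: "\<omega> \<in> space (Omega E)"
    and f: "f \<in> borel_measurable (Omega E)" and Cf: "\<forall>x\<in>space (Omega E). \<bar>f x\<bar> \<le> Cf"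
    and g: "g \<in> borel_measurable (Omega E)" and Cg: "\<forall>x\<in>space (Omega E). \<bar>g x\<bar> \<le> Cg"
  shows "kapply (\<gamma> \<Delta>) (\<lambda>\<eta>. f \<eta> * kapply (\<gamma> \<Lambda>) g \<eta>) \<omega> =
    kapply (\<gamma> \<Delta>) (\<lambda>\<eta>. kapply (\<gamma> \<Lambda>) f \<eta> * kapply (\<gamma> \<Lambda>) g \<eta>) \<omega>"
proof -
  have k: "prob_kernel E (\<gamma> \<Lambda>)"
    by (rule specification_prob_kernel[OF \<Lambda>])
  have "\<forall>x\<in>space (Omega E). \<bar>f x * kapply (\<gamma> \<Lambda>) g x\<bar> \<le> Cf * Cg"
    using Cf abs_kapply_le[OF k _ g Cg] by (auto simp: abs_mult intro!: mult_mono)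
  moreover have "(\<lambda>\<eta>. f \<eta> * kapply (\<gamma> \<Lambda>) g \<eta>) \<in> borel_measurable (Omega E)"
    using f measurable_kapply[OF k g] by (rule borel_measurable_times)
  ultimately have "kapply (\<gamma> \<Delta>) (\<lambda>\<eta>. f \<eta> * kapply (\<gamma> \<Lambda>) g \<eta>) \<omega> =
      kapply (\<gamma> \<Delta>) (kapply (\<gamma> \<Lambda>) (\<lambda>\<eta>. f \<eta> * kapply (\<gamma> \<Lambda>) g \<eta>)) \<omega>"
    by (intro specification_kapply_kapply[OF \<Lambda> \<Delta> \<open>\<Lambda> \<subseteq> \<Delta>\<close> \<omega>, symmetric])
  also have "\<dots> = kapply (\<gamma> \<Delta>) (\<lambda>\<eta>. kapply (\<gamma> \<Lambda>) f \<eta> * kapply (\<gamma> \<Lambda>) g \<eta>) \<omega>"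
    unfolding kapply_def[of "\<gamma> \<Delta>"]
    using specification_kapply_mult_kapply[OF \<Lambda> _ f g]
    by (intro Bochner_Integration.integral_cong)
      (simp_all add: space_prob_kernel[OF specification_prob_kernel[OF \<Delta>] \<omega>] kapply_def)
  finally show ?thesis .
qed

lemma specification_kapply_mult_kapply_swap:
  assumes "finite \<Lambda>" and "finite \<Delta>" and "\<Lambda> \<subseteq> \<Delta>" and "\<omega> \<in> space (Omega E)"
    and "f \<in> borel_measurable (Omega E)" and "\<forall>x\<in>space (Omega E). \<bar>f x\<bar> \<le> Cf"
    and "g \<in> borel_measurable (Omega E)" and "\<forall>x\<in>space (Omega E). \<bar>g x\<bar> \<le> Cg"
  shows "kapply (\<gamma> \<Delta>) (\<lambda>\<eta>. f \<eta> * kapply (\<gamma> \<Lambda>) g \<eta>) \<omega> =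
    kapply (\<gamma> \<Delta>) (\<lambda>\<eta>. g \<eta> * kapply (\<gamma> \<Lambda>) f \<eta>) \<omega>"
  using specification_kapply_mult_kapply_outer[OF assms]
    specification_kapply_mult_kapply_outer[OF assms(1-4,7,8,5,6)]
  by (simp add: mult.commute)

end

theorem lemma6p2:
  fixes E :: "'e measure"
    and \<gamma> :: "(int ^ 'd::finite) set \<Rightarrow> ('e, 'd) config \<Rightarrow> ('e, 'd) config measure"
    and \<Lambda> \<Gamma> :: "(int ^ 'd) set"
    and f g :: "('e, 'd) config \<Rightarrow> real"
  assumes "is_specification E \<gamma>"
    and "finite \<Lambda>"
    and "finite \<Gamma>" and "\<Gamma> \<subseteq> - \<Lambda>"
    and "f \<in> borel_measurable (Omega E)" and "\<exists>C. \<forall>\<omega>\<in>space (Omega E). \<bar>f \<omega>\<bar> \<le> C"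
    and "g \<in> borel_measurable (Omega E)" and "\<exists>C. \<forall>\<omega>\<in>space (Omega E). \<bar>g \<omega>\<bar> \<le> C"
  shows "\<forall>\<omega>\<in>space (Omega E).
    kapply (\<gamma> (\<Lambda> \<union> \<Gamma>)) (\<lambda>\<eta>. f \<eta> * kapply (\<gamma> \<Lambda>) (kapply (\<gamma> \<Gamma>) g) \<eta>) \<omega> =
    kapply (\<gamma> (\<Lambda> \<union> \<Gamma>)) (\<lambda>\<eta>. g \<eta> * kapply (\<gamma> \<Gamma>) (kapply (\<gamma> \<Lambda>) f) \<eta>) \<omega>"
proof
  note spec = assms(1) and \<Lambda> = assms(2) and \<Gamma> = assms(3) and f = assms(5) and g = assms(7)
  fix \<omega> :: "('e, 'd) config" assume \<omega>: "\<omega> \<in> space (Omega E)"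
  obtain Cf Cg where Cf: "\<forall>x\<in>space (Omega E). \<bar>f x\<bar> \<le> Cf" and Cg: "\<forall>x\<in>space (Omega E). \<bar>g x\<bar> \<le> Cg"
    using assms(6,8) by blast
  have \<Delta>: "finite (\<Lambda> \<union> \<Gamma>)"
    using \<Lambda> \<Gamma> by simp
  have \<gamma>\<Lambda>f: "kapply (\<gamma> \<Lambda>) f \<in> borel_measurable (Omega E)" "\<forall>x\<in>space (Omega E). \<bar>kapply (\<gamma> \<Lambda>) f x\<bar> \<le> Cf"
    using measurable_kapply abs_kapply_le[OF _ _ f Cf] specification_prob_kernel[OF spec \<Lambda>] f by blast+
  have \<gamma>\<Gamma>g: "kapply (\<gamma> \<Gamma>) g \<in> borel_measurable (Omega E)" "\<forall>x\<in>space (Omega E). \<bar>kapply (\<gamma> \<Gamma>) g x\<bar> \<le> Cg"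
    using measurable_kapply abs_kapply_le[OF _ _ g Cg] specification_prob_kernel[OF spec \<Gamma>] g by blast+
  have "kapply (\<gamma> (\<Lambda> \<union> \<Gamma>)) (\<lambda>\<eta>. f \<eta> * kapply (\<gamma> \<Lambda>) (kapply (\<gamma> \<Gamma>) g) \<eta>) \<omega> =
      kapply (\<gamma> (\<Lambda> \<union> \<Gamma>)) (\<lambda>\<eta>. kapply (\<gamma> \<Gamma>) g \<eta> * kapply (\<gamma> \<Lambda>) f \<eta>) \<omega>"
    by (rule specification_kapply_mult_kapply_swap[OF spec \<Lambda> \<Delta> _ \<omega> f Cf \<gamma>\<Gamma>g]) simp
  moreover have "kapply (\<gamma> (\<Lambda> \<union> \<Gamma>)) (\<lambda>\<eta>. g \<eta> * kapply (\<gamma> \<Gamma>) (kapply (\<gamma> \<Lambda>) f) \<eta>) \<omega> =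
      kapply (\<gamma> (\<Lambda> \<union> \<Gamma>)) (\<lambda>\<eta>. kapply (\<gamma> \<Lambda>) f \<eta> * kapply (\<gamma> \<Gamma>) g \<eta>) \<omega>"
    by (rule specification_kapply_mult_kapply_swap[OF spec \<Gamma> \<Delta> _ \<omega> g Cg \<gamma>\<Lambda>f]) simp
  ultimately show "kapply (\<gamma> (\<Lambda> \<union> \<Gamma>)) (\<lambda>\<eta>. f \<eta> * kapply (\<gamma> \<Lambda>) (kapply (\<gamma> \<Gamma>) g) \<eta>) \<omega> =
      kapply (\<gamma> (\<Lambda> \<union> \<Gamma>)) (\<lambda>\<eta>. g \<eta> * kapply (\<gamma> \<Gamma>) (kapply (\<gamma> \<Lambda>) f) \<eta>) \<omega>"
    by (simp add: mult.commute)
qed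

end
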